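(* Let $G=\bigl((f_j)_{j=1}^n;(\mu^{R})_{\emptyset\ne R\subseteq[n]}\bigr)$ be an $n$-resource selection game with $f_1,\ldots,f_n$ continuous. (a) There exists a consumption profile $s$ in the $|P_G|$-resource selection game $\bigl((f_j)_{j\in P_G};(\mu^R)_{\emptyset\ne R\subseteq P_G}\bigr)$ such that $h^s_j=h_G$ for every $j\in P_G$. (b) If $P_G\ne[n]$, then $h_G>h_{G-P_G}$.
   Context: An $n$-resource selection game is $G=\bigl((f_j)_{j=1}^n;(\mu^{R})_{\emptyset\ne R\subseteq[n]}\bigr)$ with each $f_j:[0,\infty)\to\mathbb{R}$ nondecreasing and each $\mu^R\ge0$ (a game on a resource set $S$ is defined analogously with $S$ in place of $[n]$). A consumption profile assigns to each nonempty $R$ a vector $s(R)\ge0$ supported on $R$ with total $\mu^R$; loads $\mu^s_j=\sum_R s_j(R)$, costs $h^s_j=f_j(\mu^s_j)$. Equalization: for nondecreasing $g_1,\ldots,g_m:[0,\infty)\to\mathbb{R}\cup\{\mathrm{undefined}\}$, $\mathrm{eq}(g_1,\ldots,g_m)(\mu)=g_1(\mu_1)$ if there exist $\mu_1,\ldots,\mu_m\ge0$ summing to $\mu$ with $g_1(\mu_1)=\cdots=g_m(\mu_m)\in\mathbb{R}$, else $\mathrm{undefined}$. For nonempty $S\subseteq[n]$: $E_G(S)=\mathrm{eq}(f_k:k\in S)\bigl(\sum_{\emptyset\ne R\subseteq S}\mu^R\bigr)$; $M_G(S)$ is the set of nonempty $S'\subseteq S$ such that for every $0\le\mu\le\sum_{R\subseteq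 S,\,R\cap S'\ne\emptyset}\mu^R$, $\mathrm{eq}(f_k:k\in S')(\mu)\ne E_G(S)$ ($\mathrm{undefined}$ differs from every real); $D_G=\{S: E_G(S)\in\mathbb{R},\ M_G(S)=\emptyset\}$; $h_G=\max_{S\in D_G}E_G(S)$; $P_G=\bigcup\{S\in D_G:E_G(S)=h_G\}$. Resource removal: for $S\subsetneq[n]$, $G-S$ is the game with resources $[n]\setminus S$, cost functions $(f_j)_{j\notin S}$, and mass $\sum_{R:\,R\setminus S=R'}\mu^R$ for each nonempty $R'\subseteq[n]\setminus S$. *)

theory Defs
  imports Complex_Main
begin

text \<open>A resource selection game on a finite resource set N (subset of nat) is given by
cost functions f :: nat => real => real (f j used for j in N, on [0,inf)) and masses
mu :: nat set => real (mu R used for nonempty R subseteq N).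
Undefined values are modelled by None.\<close>

definition eq_sol :: "(nat \<Rightarrow> real \<Rightarrow> real) \<Rightarrow> nat set \<Rightarrow> real \<Rightarrow> real \<Rightarrow> bool" where
  "eq_sol f S' \<mu> c \<longleftrightarrow> (\<exists>x :: nat \<Rightarrow> real. (\<forall>k\<in>S'. 0 \<le> x k) \<and> sum x S' = \<mu>
        \<and> (\<forall>k\<in>S'. f k (x k) = c))"

definition eqz :: "(nat \<Rightarrow> real \<Rightarrow> real) \<Rightarrow> nat set \<Rightarrow> real \<Rightarrow> real option" where
  "eqz f S' \<mu> = (if \<exists>c. eq_sol f S' \<mu> c then Some (THE c. eq_sol f S' \<mu> c) else None)"

definition E_G :: "(nat \<Rightarrow> real \<Rightarrow> real) \<Rightarrow> (nat set \<Rightarrow> real) \<Rightarrow> nat set \<Rightarrow> real option" where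
  "E_G f mu S = eqz f S (\<Sum>R\<in>{R. R \<subseteq> S \<and> R \<noteq> {}}. mu R)"

definition M_G :: "(nat \<Rightarrow> real \<Rightarrow> real) \<Rightarrow> (nat set \<Rightarrow> real) \<Rightarrow> nat set \<Rightarrow> nat set set" where
  "M_G f mu S = {S'. S' \<noteq> {} \<and> S' \<subseteq> S \<and>
      (\<forall>\<mu>. 0 \<le> \<mu> \<and> \<mu> \<le> (\<Sum>R\<in>{R. R \<subseteq> S \<and> R \<inter> S' \<noteq> {}}. mu R)
            \<longrightarrow> eqz f S' \<mu> \<noteq> E_G f mu S)}"

definition D_G :: "(nat \<Rightarrow> real \<Rightarrow> real) \<Rightarrow> (nat set \<Rightarrow> real) \<Rightarrow> nat set \<Rightarrow> nat set set" where
  "D_G f mu N = {S. S \<noteq> {} \<and> S \<subseteq> N \<and> E_G f mu S \<noteq> None \<and> M_G f mu S = {}}"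

definition h_G :: "(nat \<Rightarrow> real \<Rightarrow> real) \<Rightarrow> (nat set \<Rightarrow> real) \<Rightarrow> nat set \<Rightarrow> real" where
  "h_G f mu N = Max ((\<lambda>S. the (E_G f mu S)) ` D_G f mu N)"

definition P_G :: "(nat \<Rightarrow> real \<Rightarrow> real) \<Rightarrow> (nat set \<Rightarrow> real) \<Rightarrow> nat set \<Rightarrow> nat set" where
  "P_G f mu N = \<Union>{S \<in> D_G f mu N. E_G f mu S = Some (h_G f mu N)}"

text \<open>Masses of the game G - S (resource set N - S).\<close>
definition mu_minus :: "(nat set \<Rightarrow> real) \<Rightarrow> nat set \<Rightarrow> nat set \<Rightarrow> nat set \<Rightarrow> real" where
  "mu_minus mu N S R' = (\<Sum>R\<in>{R. R \<subseteq> N \<and> R \<noteq> {} \<and> R - S = R'}. mu R)"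

definition consumption_profile :: "nat set \<Rightarrow> (nat set \<Rightarrow> real) \<Rightarrow> (nat set \<Rightarrow> nat \<Rightarrow> real) \<Rightarrow> bool" where
  "consumption_profile N mu s \<longleftrightarrow> (\<forall>R. R \<subseteq> N \<and> R \<noteq> {} \<longrightarrow>
      (\<forall>j. 0 \<le> s R j) \<and> (\<forall>j. j \<notin> R \<longrightarrow> s R j = 0) \<and> sum (s R) R = mu R)"

definition load :: "nat set \<Rightarrow> (nat set \<Rightarrow> nat \<Rightarrow> real) \<Rightarrow> nat \<Rightarrow> real" where
  "load N s j = (\<Sum>R\<in>{R. R \<subseteq> N \<and> R \<noteq> {}}. s R j)"

end

theory Submission
  imports Defs "HOL-Analysis.Analysis"
begin

text \<open>
  With continuous nondecreasing costs a Wardrop equilibrium \<open>s\<close> exists: it is a minimizer of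
  Beckmann's potential (the sum over the resources \<open>j\<close> of the integral of \<open>f\<^sub>j\<close> from 0 to
  the load of \<open>j\<close>) over the compact set of consumption profiles.
  In an equilibrium no strategy \<open>R\<close> puts mass on a resource of \<open>R\<close> that is costlier than another
  resource of \<open>R\<close>. Hence the set \<open>Q\<close> of resources of maximal cost \<open>c\<close> carries exactly the mass
  of the strategies inside \<open>Q\<close>, so \<open>Q\<close> equalizes at \<open>c\<close> and lies in \<open>D\<^sub>G\<close>. Conversely, the
  loads of \<open>s\<close> dominate the mass any \<open>S \<in> D\<^sub>G\<close> has to equalize, which forces \<open>E\<^sub>G(S) \<le> c\<close>, with
  equality only if \<open>S \<subseteq> Q\<close>. Thus \<open>h\<^sub>G = c\<close> and \<open>P\<^sub>G = Q\<close>, and restricting \<open>s\<close> to \<open>Q\<close> gives (a).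
  Projecting \<open>s\<close> to \<open>G - Q\<close> yields an equilibrium of \<open>G - Q\<close> with the same loads, so by the
  same argument \<open>h\<^bsub>G-Q\<^esub>\<close> is a cost attained outside \<open>Q\<close>, hence below \<open>c\<close>: this is (b).
\<close>

abbreviation nonempty_subsets :: "nat set \<Rightarrow> nat set set" where
  "nonempty_subsets N \<equiv> {R. R \<subseteq> N \<and> R \<noteq> {}}"

lemma finite_nonempty_subsets: "finite N \<Longrightarrow> finite (nonempty_subsets N)"
  by (auto intro: finite_subset[of _ "Pow N"])

lemma eq_sol_sum_less:
  assumes "finite S" "S \<noteq> {}" and mono: "\<And>k. k \<in> S \<Longrightarrow> mono_on {0..} (f k)"
    and sol: "eq_sol f S \<mu> c"
    and x: "\<And>k. k \<in> S \<Longrightarrow> 0 \<le> x k" "\<And>k. k \<in> S \<Longrightarrow> f k (x k) < c"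
  shows "sum x S < \<mu>"
proof -
  obtain y where y: "\<forall>k\<in>S. 0 \<le> y k" "sum y S = \<mu>" "\<forall>k\<in>S. f k (y k) = c"
    using sol unfolding eq_sol_def by blast
  have "x k < y k" if k: "k \<in> S" for k
  proof (rule ccontr)
    assume "\<not> x k < y k"
    then have "f k (y k) \<le> f k (x k)"
      using k x(1) y(1) by (intro mono_onD[OF mono]) auto
    with k x(2) y(3) show False by force
  qed
  then have "sum x S < sum y S"
    using assms(1,2) by (intro sum_strict_mono)
  with y(2) show ?thesis by simp
qed

lemma eq_sol_unique:
  assumes "finite S" "S \<noteq> {}" "\<And>k. k \<in> S \<Longrightarrow> mono_on {0..} (f k)"
    and "eq_sol f S \<mu> c" "eq_sol f S \<mu> c'"
  shows "c = c'"
proof -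
  have False if a: "eq_sol f S \<mu> a" and b: "eq_sol f S \<mu> b" and "a < b" for a b
  proof -
    obtain x where "\<forall>k\<in>S. 0 \<le> x k" "sum x S = \<mu>" "\<forall>k\<in>S. f k (x k) = a"
      using a unfolding eq_sol_def by blast
    with eq_sol_sum_less[OF assms(1-3) b, of x] \<open>a < b\<close> show False by auto
  qed
  with assms(4,5) show ?thesis by (metis linorder_neqE_linordered_idom)
qed

lemma eqz_eq_Some_iff:
  assumes "finite S" "S \<noteq> {}" "\<And>k. k \<in> S \<Longrightarrow> mono_on {0..} (f k)"
  shows "eqz f S \<mu> = Some c \<longleftrightarrow> eq_sol f S \<mu> c"
  using eq_sol_unique[where f=f, OF assms] unfolding eqz_def by (metis option.inject option.distinct(1) the_equality)

lemma integral_increment_bounds: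
  fixes g :: "real \<Rightarrow> real"
  assumes mono: "mono_on {0..} g" and cont: "continuous_on {0..} g" and "0 \<le> a" "a \<le> b"
  shows "(b - a) * g a \<le> integral {0..b} g - integral {0..a} g"
    and "integral {0..b} g - integral {0..a} g \<le> (b - a) * g b"
proof -
  have "g integrable_on {0..b}" "g integrable_on {a..b}"
    using assms by (auto intro!: integrable_continuous_interval continuous_on_subset[OF cont])
  then have diff: "integral {0..b} g - integral {0..a} g = integral {a..b} g"
    using Henstock_Kurzweil_Integration.integral_combine[where a=0 and c=a and b=b and f=g] assms by auto
  have "integral {a..b} (\<lambda>_. g a) \<le> integral {a..b} g"
    using \<open>g integrable_on {a..b}\<close> assms by (intro integral_le) (auto intro!: mono_onD[OF mono])
  with diff assms show "(b - a) * g a \<le> integral {0..b} g - integral {0..a} g" by simp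
  have "integral {a..b} g \<le> integral {a..b} (\<lambda>_. g b)"
    using \<open>g integrable_on {a..b}\<close> assms by (intro integral_le) (auto intro!: mono_onD[OF mono])
  with diff assms show "integral {0..b} g - integral {0..a} g \<le> (b - a) * g b" by simp
qed

lemma exchange_decreases_integrals:
  fixes g h :: "real \<Rightarrow> real"
  assumes g: "mono_on {0..} g" "continuous_on {0..} g"
    and h: "mono_on {0..} h" "continuous_on {0..} h"
    and "0 \<le> a" "0 < u" "u \<le> b" and less: "g a < h b"
  obtains \<epsilon> where "0 < \<epsilon>" "\<epsilon> \<le> u"
    "(integral {0..a + \<epsilon>} g - integral {0..a} g) + (integral {0..b - \<epsilon>} h - integral {0..b} h) < 0"
proof -
  define \<delta> where "\<delta> = (h b - g a) / 2"
  have "0 < \<delta>" using less by (simp add: \<delta>_def)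
  obtain d1 where "0 < d1" and d1: "\<And>y. y \<in> {0..} \<Longrightarrow> dist y a < d1 \<Longrightarrow> dist (g y) (g a) < \<delta>"
    using g(2) \<open>0 \<le> a\<close> \<open>0 < \<delta>\<close> unfolding continuous_on_iff by (metis atLeast_iff)
  obtain d2 where "0 < d2" and d2: "\<And>y. y \<in> {0..} \<Longrightarrow> dist y b < d2 \<Longrightarrow> dist (h y) (h b) < \<delta>"
    using h(2) assms(6,7) \<open>0 < \<delta>\<close> unfolding continuous_on_iff by (metis atLeast_iff order.trans less_imp_le)
  define \<epsilon> where "\<epsilon> = min u (min d1 d2) / 2"
  have "0 < \<epsilon>" "\<epsilon> \<le> u" "\<epsilon> < d1" "\<epsilon> < d2"
    using \<open>0 < u\<close> \<open>0 < d1\<close> \<open>0 < d2\<close> by (auto simp: \<epsilon>_def)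
  have "g (a + \<epsilon>) < g a + \<delta>"
    using d1[of "a + \<epsilon>"] \<open>0 \<le> a\<close> \<open>0 < \<epsilon>\<close> \<open>\<epsilon> < d1\<close> by (auto simp: dist_real_def)
  moreover have "h b - \<delta> < h (b - \<epsilon>)"
    using d2[of "b - \<epsilon>"] \<open>\<epsilon> \<le> u\<close> \<open>u \<le> b\<close> \<open>0 < \<epsilon>\<close> \<open>\<epsilon> < d2\<close> by (auto simp: dist_real_def)
  moreover have "g a + \<delta> = h b - \<delta>" by (simp add: \<delta>_def field_simps)
  ultimately have "\<epsilon> * g (a + \<epsilon>) < \<epsilon> * h (b - \<epsilon>)"
    using \<open>0 < \<epsilon>\<close> by (intro mult_strict_left_mono) auto
  moreover have "integral {0..a + \<epsilon>} g - integral {0..a} g \<le> \<epsilon> * g (a + \<epsilon>)"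
    using integral_increment_bounds(2)[OF g, of a "a + \<epsilon>"] \<open>0 \<le> a\<close> \<open>0 < \<epsilon>\<close> by simp
  moreover have "\<epsilon> * h (b - \<epsilon>) \<le> integral {0..b} h - integral {0..b - \<epsilon>} h"
    using integral_increment_bounds(1)[OF h, of "b - \<epsilon>" b] \<open>0 < \<epsilon>\<close> \<open>\<epsilon> \<le> u\<close> \<open>u \<le> b\<close> by simp
  ultimately have "(integral {0..a + \<epsilon>} g - integral {0..a} g) + (integral {0..b - \<epsilon>} h - integral {0..b} h) < 0"
    by linarith
  with \<open>0 < \<epsilon>\<close> \<open>\<epsilon> \<le> u\<close> show ?thesis by (rule that)
qed

lemma compact_PiE_UNIV:
  fixes S :: "'i \<Rightarrow> 'b::topological_space set"
  assumes "\<And>i. compact (S i)"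
  shows "compact (PiE UNIV S)"
proof -
  have "compactin (product_topology (\<lambda>_. euclidean) UNIV) (PiE UNIV S)"
    using assms by (simp add: compactin_PiE)
  then show ?thesis by (simp add: euclidean_product_topology)
qed

lemma continuous_on_coordinate2:
  "continuous_on A (\<lambda>s::'a \<Rightarrow> 'b \<Rightarrow> 'c::topological_space. s i j)"
  by (rule continuous_on_subset[OF continuous_on_product_then_coordinatewise
        [OF continuous_on_product_coordinates]]) simp

lemma consumption_profile_le_mass:
  assumes "consumption_profile N mu s" "finite N" "R \<in> nonempty_subsets N"
  shows "s R j \<le> mu R"
proof -
  have nonneg: "\<And>i. 0 \<le> s R i" and outside: "j \<notin> R \<Longrightarrow> s R j = 0" and mass: "sum (s R) R = mu R"
    using assms(1,3) unfolding consumption_profile_def by auto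
  have "finite R" using assms(2,3) finite_subset by blast
  then have "s R j \<le> sum (s R) R"
    using nonneg outside by (cases "j \<in> R") (auto intro: member_le_sum sum_nonneg)
  with mass show ?thesis by simp
qed

lemma load_nonneg:
  assumes "consumption_profile N mu s"
  shows "0 \<le> load N s m"
  using assms unfolding load_def consumption_profile_def by (intro sum_nonneg) simp

lemma consumption_profile_le_load:
  assumes "consumption_profile N mu s" "finite N" "R \<in> nonempty_subsets N"
  shows "s R m \<le> load N s m"
  unfolding load_def
proof (rule member_le_sum)
  show "0 \<le> s R' m" if "R' \<in> nonempty_subsets N - {R}" for R'
    using assms(1) that unfolding consumption_profile_def by simp
qed (use assms finite_nonempty_subsets in simp_all)

lemma load_le_total_mass:
  assumes "consumption_profile N mu s" "finite N"
  shows "load N s m \<le> (\<Sum>R\<in>nonempty_subsets N. mu R)"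
  unfolding load_def using consumption_profile_le_mass[OF assms] by (intro sum_mono) simp

text \<open>\<open>consumption_profile\<close> constrains \<open>s R\<close> only for nonempty \<open>R \<subseteq> N\<close>; fixing \<open>s R = 0\<close>
  for all other \<open>R\<close> makes the set of profiles compact.\<close>

definition feasible_profiles :: "nat set \<Rightarrow> (nat set \<Rightarrow> real) \<Rightarrow> (nat set \<Rightarrow> nat \<Rightarrow> real) set" where
  "feasible_profiles N mu = {s. consumption_profile N mu s \<and>
      (\<forall>R. R \<notin> nonempty_subsets N \<longrightarrow> (\<forall>j. s R j = 0))}"

lemma closed_Collect_const_imp: "closed {x. Q x} \<Longrightarrow> closed {x. P \<longrightarrow> Q x}"
  by (cases P) simp_all

lemma closed_feasible_profiles: "closed (feasible_profiles N mu)"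
proof -
  have coord: "continuous_on UNIV (\<lambda>s::nat set \<Rightarrow> nat \<Rightarrow> real. s R j)" for R j
    by (rule continuous_on_coordinate2)
  have "feasible_profiles N mu = {s. \<forall>R.
      (R \<in> nonempty_subsets N \<longrightarrow> (\<forall>j. 0 \<le> s R j) \<and> (\<forall>j. j \<notin> R \<longrightarrow> s R j = 0) \<and> sum (s R) R = mu R) \<and>
      (R \<notin> nonempty_subsets N \<longrightarrow> (\<forall>j. s R j = 0))}"
    unfolding feasible_profiles_def consumption_profile_def all_conj_distrib by simp
  also have "closed \<dots>"
  proof (rule closed_Collect_all, rule closed_Collect_conj; rule closed_Collect_const_imp)
    fix R
    show "closed {s. (\<forall>j. 0 \<le> s R j) \<and> (\<forall>j. j \<notin> R \<longrightarrow> s R j = 0) \<and> sum (s R) R = mu R}"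
      by (intro closed_Collect_conj closed_Collect_all closed_Collect_const_imp closed_Collect_le
          closed_Collect_eq continuous_on_sum coord continuous_on_const)
    show "closed {s::nat set \<Rightarrow> nat \<Rightarrow> real. \<forall>j. s R j = 0}"
      by (intro closed_Collect_all closed_Collect_eq coord continuous_on_const)
  qed
  finally show ?thesis .
qed

lemma compact_feasible_profiles:
  assumes "finite N"
  shows "compact (feasible_profiles N mu)"
proof -
  let ?B = "PiE UNIV (\<lambda>R. PiE UNIV (\<lambda>_. {0..\<bar>mu R\<bar>}))"
  have "s R j \<in> {0..\<bar>mu R\<bar>}" if "s \<in> feasible_profiles N mu" for s R j
  proof (cases "R \<in> nonempty_subsets N")
    case True
    have cp: "consumption_profile N mu s" using that unfolding feasible_profiles_def by simp
    then have "0 \<le> s R j" using True unfolding consumption_profile_def by simp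
    with consumption_profile_le_mass[OF cp assms True] show ?thesis
      by (auto intro: order_trans[OF _ abs_ge_self])
  next
    case False
    with that show ?thesis unfolding feasible_profiles_def by simp
  qed
  then have "feasible_profiles N mu = ?B \<inter> feasible_profiles N mu"
    by (auto simp: PiE_iff)
  also have "compact \<dots>"
    by (intro compact_Int_closed compact_PiE_UNIV closed_feasible_profiles) simp
  finally show ?thesis .
qed

lemma feasible_profiles_nonempty:
  assumes "finite N" and nonneg: "\<And>R. R \<in> nonempty_subsets N \<Longrightarrow> 0 \<le> mu R"
  shows "feasible_profiles N mu \<noteq> {}"
proof -
  define s where "s = (\<lambda>R j. if R \<in> nonempty_subsets N \<and> j \<in> R then mu R / card R else 0)"
  have "0 \<le> s R j" for R j
    using nonneg by (simp add: s_def)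
  moreover have "sum (s R) R = mu R" if R: "R \<in> nonempty_subsets N" for R
  proof -
    have "card R \<noteq> 0" using R assms(1) finite_subset by fastforce
    have "sum (s R) R = (\<Sum>j\<in>R. mu R / card R)"
      using R by (intro sum.cong) (simp_all add: s_def)
    also have "\<dots> = mu R" using \<open>card R \<noteq> 0\<close> by simp
    finally show ?thesis .
  qed
  moreover have "s R j = 0" if "R \<notin> nonempty_subsets N \<or> j \<notin> R" for R j
    using that by (auto simp: s_def)
  ultimately have "s \<in> feasible_profiles N mu"
    unfolding feasible_profiles_def consumption_profile_def by simp
  then show ?thesis by blast
qed

definition shift_mass ::
    "(nat set \<Rightarrow> nat \<Rightarrow> real) \<Rightarrow> nat set \<Rightarrow> nat \<Rightarrow> nat \<Rightarrow> real \<Rightarrow> nat set \<Rightarrow> nat \<Rightarrow> real" where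
  "shift_mass s R k j \<epsilon> = (\<lambda>R' i. s R' i + (if R' = R \<and> i = j then \<epsilon> else 0) - (if R' = R \<and> i = k then \<epsilon> else 0))"

lemma load_shift_mass:
  assumes "finite N" "R \<in> nonempty_subsets N"
  shows "load N (shift_mass s R k j \<epsilon>) i = load N s i + (if i = j then \<epsilon> else 0) - (if i = k then \<epsilon> else 0)"
  using assms finite_nonempty_subsets[OF assms(1)]
  by (simp add: load_def shift_mass_def sum.distrib sum_subtractf)

lemma feasible_shift_mass:
  assumes "s \<in> feasible_profiles N mu" "finite N" "R \<in> nonempty_subsets N"
    and "k \<in> R" "j \<in> R" "0 \<le> \<epsilon>" "\<epsilon> \<le> s R k"
  shows "shift_mass s R k j \<epsilon> \<in> feasible_profiles N mu"
proof -
  let ?t = "shift_mass s R k j \<epsilon>"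
  have "finite R" using assms(2,3) finite_subset by blast
  have cp: "consumption_profile N mu s" and out: "\<And>R' i. R' \<notin> nonempty_subsets N \<Longrightarrow> s R' i = 0"
    using assms(1) unfolding feasible_profiles_def by auto
  have other: "?t R' = s R'" if "R' \<noteq> R" for R'
    using that by (simp add: shift_mass_def)
  show ?thesis
    unfolding feasible_profiles_def consumption_profile_def
  proof (intro CollectI conjI allI impI)
    fix R' i assume R': "R' \<subseteq> N \<and> R' \<noteq> {}"
    then have nonneg: "0 \<le> s R' i'" and outside: "i' \<notin> R' \<Longrightarrow> s R' i' = 0" for i'
      using cp unfolding consumption_profile_def by auto
    show "0 \<le> ?t R' i"
      using nonneg[of i] assms(6,7) by (cases "R' = R") (auto simp: other shift_mass_def)
    show "?t R' i = 0" if "i \<notin> R'"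
      using outside[OF that] that assms(4,5) by (cases "R' = R") (auto simp: other shift_mass_def)
    show "sum (?t R') R' = mu R'"
    proof (cases "R' = R")
      case True
      have "sum (?t R) R = sum (s R) R"
        using \<open>finite R\<close> assms(4,5) by (simp add: shift_mass_def sum.distrib sum_subtractf)
      with True R' cp show ?thesis unfolding consumption_profile_def by simp
    next
      case False
      with R' cp show ?thesis unfolding consumption_profile_def by (simp add: other)
    qed
  next
    fix R' i assume R': "R' \<notin> nonempty_subsets N"
    then have "R' \<noteq> R" using assms(3) by blast
    with out[OF R'] show "?t R' i = 0" by (simp add: other)
  qed
qed

definition potential :: "nat set \<Rightarrow> (nat \<Rightarrow> real \<Rightarrow> real) \<Rightarrow> (nat set \<Rightarrow> nat \<Rightarrow> real) \<Rightarrow> real" where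
  "potential N f s = (\<Sum>m\<in>N. integral {0..load N s m} (f m))"

lemma potential_shift_mass:
  assumes "finite N" "R \<in> nonempty_subsets N" "k \<in> N" "j \<in> N" "k \<noteq> j"
  shows "potential N f (shift_mass s R k j \<epsilon>) - potential N f s =
    (integral {0..load N s j + \<epsilon>} (f j) - integral {0..load N s j} (f j)) +
    (integral {0..load N s k - \<epsilon>} (f k) - integral {0..load N s k} (f k))"
proof -
  have "potential N f (shift_mass s R k j \<epsilon>) - potential N f s =
      (\<Sum>m\<in>N. (if m = j then integral {0..load N s j + \<epsilon>} (f j) - integral {0..load N s j} (f j) else 0) +
              (if m = k then integral {0..load N s k - \<epsilon>} (f k) - integral {0..load N s k} (f k) else 0))"
    unfolding potential_def sum_subtractf[symmetric]
    using assms(5) by (intro sum.cong) (auto simp: load_shift_mass[OF assms(1,2)])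
  also have "\<dots> = (integral {0..load N s j + \<epsilon>} (f j) - integral {0..load N s j} (f j)) +
    (integral {0..load N s k - \<epsilon>} (f k) - integral {0..load N s k} (f k))"
    using assms(1,3,4) by (simp add: sum.distrib)
  finally show ?thesis .
qed

lemma continuous_on_potential:
  assumes "finite N" and cont: "\<And>j. j \<in> N \<Longrightarrow> continuous_on {0..} (f j)"
  shows "continuous_on (feasible_profiles N mu) (potential N f)"
  unfolding potential_def
proof (intro continuous_on_sum)
  fix m assume "m \<in> N"
  let ?M = "\<Sum>R\<in>nonempty_subsets N. mu R"
  have "continuous_on {0..?M} (\<lambda>y. integral {0..y} (f m))"
    using cont[OF \<open>m \<in> N\<close>]
    by (intro indefinite_integral_continuous_1 integrable_continuous_interval)
      (auto intro: continuous_on_subset)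
  moreover have "continuous_on (feasible_profiles N mu) (\<lambda>s. load N s m)"
    unfolding load_def by (intro continuous_on_sum continuous_on_coordinate2)
  moreover have "(\<lambda>s. load N s m) ` feasible_profiles N mu \<subseteq> {0..?M}"
    using load_nonneg load_le_total_mass[OF _ assms(1)] unfolding feasible_profiles_def by auto
  ultimately show "continuous_on (feasible_profiles N mu) (\<lambda>s. integral {0..load N s m} (f m))"
    by (rule continuous_on_compose2)
qed

definition wardrop_equilibrium ::
    "nat set \<Rightarrow> (nat \<Rightarrow> real \<Rightarrow> real) \<Rightarrow> (nat set \<Rightarrow> real) \<Rightarrow> (nat set \<Rightarrow> nat \<Rightarrow> real) \<Rightarrow> bool" where
  "wardrop_equilibrium N f mu s \<longleftrightarrow> consumption_profile N mu s \<and>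
     (\<forall>R\<in>nonempty_subsets N. \<forall>k\<in>R. 0 < s R k \<longrightarrow> (\<forall>j\<in>R. f k (load N s k) \<le> f j (load N s j)))"

theorem wardrop_equilibrium_exists:
  assumes fin: "finite N"
    and mono: "\<And>j. j \<in> N \<Longrightarrow> mono_on {0..} (f j)"
    and cont: "\<And>j. j \<in> N \<Longrightarrow> continuous_on {0..} (f j)"
    and nonneg: "\<And>R. R \<in> nonempty_subsets N \<Longrightarrow> 0 \<le> mu R"
  obtains s where "wardrop_equilibrium N f mu s"
proof -
  have "compact (feasible_profiles N mu)"
    using fin by (rule compact_feasible_profiles)
  moreover have "feasible_profiles N mu \<noteq> {}"
    using fin nonneg by (rule feasible_profiles_nonempty)
  moreover have "continuous_on (feasible_profiles N mu) (potential N f)"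
    using fin cont by (rule continuous_on_potential)
  ultimately have "\<exists>s\<in>feasible_profiles N mu. \<forall>t\<in>feasible_profiles N mu. potential N f s \<le> potential N f t"
    by (rule continuous_attains_inf)
  then obtain s where s: "s \<in> feasible_profiles N mu"
    and min: "\<forall>t\<in>feasible_profiles N mu. potential N f s \<le> potential N f t"
    by blast
  have cp: "consumption_profile N mu s" using s unfolding feasible_profiles_def by simp
  have "f k (load N s k) \<le> f j (load N s j)"
    if R: "R \<in> nonempty_subsets N" and k: "k \<in> R" and j: "j \<in> R" and pos: "0 < s R k" for R k j
  proof (rule ccontr)
    assume "\<not> ?thesis"
    then have less: "f j (load N s j) < f k (load N s k)" by simp
    then have "k \<noteq> j" by auto
    have "k \<in> N" "j \<in> N" using R k j by auto
    obtain \<epsilon> where "0 < \<epsilon>" "\<epsilon> \<le> s R k" and decrease: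
      "(integral {0..load N s j + \<epsilon>} (f j) - integral {0..load N s j} (f j)) +
       (integral {0..load N s k - \<epsilon>} (f k) - integral {0..load N s k} (f k)) < 0"
      using exchange_decreases_integrals[OF mono[OF \<open>j \<in> N\<close>] cont[OF \<open>j \<in> N\<close>]
          mono[OF \<open>k \<in> N\<close>] cont[OF \<open>k \<in> N\<close>] load_nonneg[OF cp] pos
          consumption_profile_le_load[OF cp fin R] less] .
    then have "potential N f (shift_mass s R k j \<epsilon>) < potential N f s"
      using potential_shift_mass[OF fin R \<open>k \<in> N\<close> \<open>j \<in> N\<close> \<open>k \<noteq> j\<close>, of f s \<epsilon>] by linarith
    moreover have "shift_mass s R k j \<epsilon> \<in> feasible_profiles N mu"
      using \<open>0 < \<epsilon>\<close> \<open>\<epsilon> \<le> s R k\<close> by (intro feasible_shift_mass[OF s fin R k j]) simp_all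
    ultimately show False using min by (meson not_le)
  qed
  with cp have "wardrop_equilibrium N f mu s"
    unfolding wardrop_equilibrium_def by blast
  then show ?thesis by (rule that)
qed

locale wardrop_state =
  fixes N :: "nat set" and f :: "nat \<Rightarrow> real \<Rightarrow> real" and mu :: "nat set \<Rightarrow> real"
    and s :: "nat set \<Rightarrow> nat \<Rightarrow> real"
  assumes finite_N: "finite N" and N_nonempty: "N \<noteq> {}"
    and mono: "\<And>j. j \<in> N \<Longrightarrow> mono_on {0..} (f j)"
    and equilibrium: "wardrop_equilibrium N f mu s"
begin

abbreviation cost :: "nat \<Rightarrow> real" where
  "cost j \<equiv> f j (load N s j)"

definition max_cost :: real where
  "max_cost = Max (cost ` N)"

definition costliest :: "nat set" where
  "costliest = {k \<in> N. cost k = max_cost}"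

lemma profile: "consumption_profile N mu s"
  using equilibrium unfolding wardrop_equilibrium_def by simp

lemma profile_nonneg: "R \<in> nonempty_subsets N \<Longrightarrow> 0 \<le> s R k"
  using profile unfolding consumption_profile_def by simp

lemma profile_outside: "R \<in> nonempty_subsets N \<Longrightarrow> k \<notin> R \<Longrightarrow> s R k = 0"
  using profile unfolding consumption_profile_def by simp

lemma profile_mass: "R \<in> nonempty_subsets N \<Longrightarrow> sum (s R) R = mu R"
  using profile unfolding consumption_profile_def by simp

lemma finite_subset_N: "R \<subseteq> N \<Longrightarrow> finite R"
  using finite_N finite_subset by blast

lemma equilibrium_cost_le:
  "R \<in> nonempty_subsets N \<Longrightarrow> k \<in> R \<Longrightarrow> j \<in> R \<Longrightarrow> 0 < s R k \<Longrightarrow> cost k \<le> cost j"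
  using equilibrium unfolding wardrop_equilibrium_def by blast

lemma no_flow_to_costlier:
  assumes "R \<in> nonempty_subsets N" "k \<in> R" "j \<in> R" "cost j < cost k"
  shows "s R k = 0"
proof (rule ccontr)
  assume "s R k \<noteq> 0"
  with profile_nonneg[OF assms(1)] have "0 < s R k"
    by (simp add: order_less_le)
  with assms(1-3) have "cost k \<le> cost j" by (rule equilibrium_cost_le)
  with assms(4) show False by simp
qed

lemma cost_le_max_cost: "k \<in> N \<Longrightarrow> cost k \<le> max_cost"
  unfolding max_cost_def using finite_N by simp

lemma costliest_subset: "costliest \<subseteq> N"
  unfolding costliest_def by blast

lemma costliest_nonempty: "costliest \<noteq> {}"
proof -
  have "max_cost \<in> cost ` N"
    unfolding max_cost_def using finite_N N_nonempty by (intro Max_in) simp_all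
  then show ?thesis unfolding costliest_def by force
qed

lemma cost_less_max_cost: "k \<in> N \<Longrightarrow> k \<notin> costliest \<Longrightarrow> cost k < max_cost"
  using cost_le_max_cost[of k] unfolding costliest_def by auto

lemma no_flow_into_costliest:
  assumes "R \<in> nonempty_subsets N" "\<not> R \<subseteq> costliest" "k \<in> costliest"
  shows "s R k = 0"
proof (cases "k \<in> R")
  case True
  obtain j where "j \<in> R" "j \<notin> costliest" using assms(2) by blast
  with assms(1) have "cost j < max_cost" by (intro cost_less_max_cost) auto
  with assms(3) have "cost j < cost k" unfolding costliest_def by simp
  with assms(1) True \<open>j \<in> R\<close> show ?thesis by (rule no_flow_to_costlier)
qed (use assms(1) profile_outside in simp)

lemma sum_profile_eq_mass:
  assumes R: "R \<in> nonempty_subsets N" and "finite S" and zero: "\<And>k. k \<in> R - S \<Longrightarrow> s R k = 0"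
  shows "(\<Sum>k\<in>S. s R k) = mu R"
proof -
  have "(\<Sum>k\<in>S. s R k) = (\<Sum>k\<in>S \<inter> R. s R k)"
    using \<open>finite S\<close> profile_outside[OF R] by (intro sum.mono_neutral_right) auto
  also have "\<dots> = (\<Sum>k\<in>R. s R k)"
    using R zero by (intro sum.mono_neutral_left) (auto intro: finite_subset_N)
  also have "\<dots> = mu R" using profile_mass[OF R] .
  finally show ?thesis .
qed

lemma sum_profile_le_mass:
  assumes R: "R \<in> nonempty_subsets N" and "finite S"
  shows "(\<Sum>k\<in>S. s R k) \<le> mu R"
proof -
  have "(\<Sum>k\<in>S. s R k) = (\<Sum>k\<in>S \<inter> R. s R k)"
    using \<open>finite S\<close> profile_outside[OF R] by (intro sum.mono_neutral_right) auto
  also have "\<dots> \<le> (\<Sum>k\<in>R. s R k)"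
    using R profile_nonneg[OF R] by (intro sum_mono2) (auto intro: finite_subset_N)
  also have "\<dots> = mu R" using profile_mass[OF R] .
  finally show ?thesis .
qed

lemma sum_profile_nonneg: "R \<in> nonempty_subsets N \<Longrightarrow> 0 \<le> (\<Sum>k\<in>S. s R k)"
  using profile_nonneg by (simp add: sum_nonneg)

lemma sum_load_swap: "(\<Sum>k\<in>S. load N s k) = (\<Sum>R\<in>nonempty_subsets N. \<Sum>k\<in>S. s R k)"
  unfolding load_def by (rule sum.swap)

lemma sum_mass_as_filter:
  assumes "S \<subseteq> N" "\<And>R. P R \<Longrightarrow> R \<noteq> {}"
  shows "(\<Sum>R\<in>{R. R \<subseteq> S \<and> P R}. mu R) = (\<Sum>R\<in>nonempty_subsets N. if R \<subseteq> S \<and> P R then mu R else 0)"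
proof -
  have "{R. R \<subseteq> S \<and> P R} = {R \<in> nonempty_subsets N. R \<subseteq> S \<and> P R}"
    using assms by blast
  then show ?thesis
    by (simp only: sum.inter_filter[OF finite_nonempty_subsets[OF finite_N]])
qed

lemma mass_le_sum_load:
  assumes "S \<subseteq> N"
  shows "(\<Sum>R\<in>{R. R \<subseteq> S \<and> R \<noteq> {}}. mu R) \<le> (\<Sum>k\<in>S. load N s k)"
proof -
  have "finite S" using assms by (rule finite_subset_N)
  have "(\<Sum>R\<in>{R. R \<subseteq> S \<and> R \<noteq> {}}. mu R) = (\<Sum>R\<in>nonempty_subsets N. if R \<subseteq> S \<and> R \<noteq> {} then mu R else 0)"
    using assms by (rule sum_mass_as_filter)
  also have "\<dots> \<le> (\<Sum>R\<in>nonempty_subsets N. \<Sum>k\<in>S. s R k)"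
  proof (intro sum_mono)
    fix R assume R: "R \<in> nonempty_subsets N"
    have "(\<Sum>k\<in>S. s R k) = mu R" if "R \<subseteq> S"
      using that by (intro sum_profile_eq_mass[OF R \<open>finite S\<close>]) auto
    with sum_profile_nonneg[OF R]
    show "(if R \<subseteq> S \<and> R \<noteq> {} then mu R else 0) \<le> (\<Sum>k\<in>S. s R k)" by auto
  qed
  finally show ?thesis by (simp only: sum_load_swap)
qed

lemma mass_costliest_eq_sum_load:
  "(\<Sum>R\<in>{R. R \<subseteq> costliest \<and> R \<noteq> {}}. mu R) = (\<Sum>k\<in>costliest. load N s k)"
proof -
  have "finite costliest" using costliest_subset by (rule finite_subset_N)
  have "(\<Sum>R\<in>{R. R \<subseteq> costliest \<and> R \<noteq> {}}. mu R) =
      (\<Sum>R\<in>nonempty_subsets N. if R \<subseteq> costliest \<and> R \<noteq> {} then mu R else 0)"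
    using costliest_subset by (rule sum_mass_as_filter)
  also have "\<dots> = (\<Sum>R\<in>nonempty_subsets N. \<Sum>k\<in>costliest. s R k)"
  proof (intro sum.cong refl)
    fix R assume R: "R \<in> nonempty_subsets N"
    have "(\<Sum>k\<in>costliest. s R k) = mu R" if "R \<subseteq> costliest"
      using that by (intro sum_profile_eq_mass[OF R \<open>finite costliest\<close>]) auto
    moreover have "(\<Sum>k\<in>costliest. s R k) = 0" if "\<not> R \<subseteq> costliest"
      using no_flow_into_costliest[OF R that] by simp
    ultimately show "(if R \<subseteq> costliest \<and> R \<noteq> {} then mu R else 0) = (\<Sum>k\<in>costliest. s R k)"
      using R by auto
  qed
  finally show ?thesis by (simp only: sum_load_swap)
qed

lemma sum_load_le_touching_mass:
  assumes "S' \<subseteq> costliest"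
  shows "(\<Sum>k\<in>S'. load N s k) \<le> (\<Sum>R\<in>{R. R \<subseteq> costliest \<and> R \<inter> S' \<noteq> {}}. mu R)"
proof -
  have "finite S'" using assms costliest_subset by (blast intro: finite_subset_N)
  have "(\<Sum>R\<in>nonempty_subsets N. \<Sum>k\<in>S'. s R k) \<le>
      (\<Sum>R\<in>nonempty_subsets N. if R \<subseteq> costliest \<and> R \<inter> S' \<noteq> {} then mu R else 0)"
  proof (intro sum_mono)
    fix R assume R: "R \<in> nonempty_subsets N"
    show "(\<Sum>k\<in>S'. s R k) \<le> (if R \<subseteq> costliest \<and> R \<inter> S' \<noteq> {} then mu R else 0)"
    proof (cases "R \<subseteq> costliest \<and> R \<inter> S' \<noteq> {}")
      case True
      with sum_profile_le_mass[OF R \<open>finite S'\<close>] show ?thesis by simp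
    next
      case False
      have "s R k = 0" if "k \<in> S'" for k
        using False that assms profile_outside[OF R] no_flow_into_costliest[OF R] by blast
      with False show ?thesis by auto
    qed
  qed
  also have "\<dots> = (\<Sum>R\<in>{R. R \<subseteq> costliest \<and> R \<inter> S' \<noteq> {}}. mu R)"
    using costliest_subset by (intro sum_mass_as_filter[symmetric]) auto
  finally show ?thesis by (simp only: sum_load_swap)
qed

lemma touching_mass_le_sum_load:
  assumes "S \<subseteq> N"
  shows "(\<Sum>R\<in>{R. R \<subseteq> S \<and> R \<inter> (S - costliest) \<noteq> {}}. mu R) \<le> (\<Sum>k\<in>S - costliest. load N s k)"
proof -
  let ?S' = "S - costliest"
  have "finite ?S'" using assms by (blast intro: finite_subset_N)
  have "(\<Sum>R\<in>{R. R \<subseteq> S \<and> R \<inter> ?S' \<noteq> {}}. mu R) =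
      (\<Sum>R\<in>nonempty_subsets N. if R \<subseteq> S \<and> R \<inter> ?S' \<noteq> {} then mu R else 0)"
    using assms by (intro sum_mass_as_filter) auto
  also have "\<dots> \<le> (\<Sum>R\<in>nonempty_subsets N. \<Sum>k\<in>?S'. s R k)"
  proof (intro sum_mono)
    fix R assume R: "R \<in> nonempty_subsets N"
    show "(if R \<subseteq> S \<and> R \<inter> ?S' \<noteq> {} then mu R else 0) \<le> (\<Sum>k\<in>?S'. s R k)"
    proof (cases "R \<subseteq> S \<and> R \<inter> ?S' \<noteq> {}")
      case True
      then obtain j where j: "j \<in> R" "j \<in> ?S'" by blast
      have "cost j < max_cost" using j assms by (intro cost_less_max_cost) auto
      \<comment> \<open>the cheaper resource j blocks all flow of R into the costliest resources\<close>
      have "s R k = 0" if "k \<in> R - ?S'" for k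
      proof -
        have "k \<in> costliest" using that True by blast
        then have "cost j < cost k" using \<open>cost j < max_cost\<close> unfolding costliest_def by simp
        with R that j(1) show ?thesis by (intro no_flow_to_costlier) auto
      qed
      with True sum_profile_eq_mass[OF R \<open>finite ?S'\<close>] show ?thesis by simp
    next
      case False
      with sum_profile_nonneg[OF R] show ?thesis by auto
    qed
  qed
  finally show ?thesis by (simp only: sum_load_swap)
qed

lemma eqz_eq_Some_iff_subset:
  assumes "S \<subseteq> N" "S \<noteq> {}"
  shows "eqz f S \<mu> = Some c \<longleftrightarrow> eq_sol f S \<mu> c"
proof (rule eqz_eq_Some_iff)
  show "finite S" using assms(1) by (rule finite_subset_N)
qed (use assms mono in auto)

lemma eq_sol_loads:
  assumes "\<And>k. k \<in> S \<Longrightarrow> cost k = c"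
  shows "eq_sol f S (\<Sum>k\<in>S. load N s k) c"
  unfolding eq_sol_def using assms load_nonneg[OF profile] by (intro exI[of _ "load N s"]) simp

lemma sum_load_less_eq_sol:
  assumes "S \<subseteq> N" "S \<noteq> {}" "eq_sol f S \<mu> c" "\<And>k. k \<in> S \<Longrightarrow> cost k < c"
  shows "(\<Sum>k\<in>S. load N s k) < \<mu>"
proof (rule eq_sol_sum_less[OF _ assms(2) _ assms(3)])
  show "finite S" using assms(1) by (rule finite_subset_N)
qed (use assms mono load_nonneg[OF profile] in auto)

lemma E_G_costliest: "E_G f mu costliest = Some max_cost"
  unfolding E_G_def mass_costliest_eq_sum_load
  using costliest_subset costliest_nonempty eq_sol_loads[of costliest max_cost]
  by (simp add: eqz_eq_Some_iff_subset costliest_def)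

lemma M_G_costliest: "M_G f mu costliest = {}"
proof (rule ccontr)
  assume "M_G f mu costliest \<noteq> {}"
  then obtain S' where S': "S' \<noteq> {}" "S' \<subseteq> costliest"
    and avoid: "\<And>\<mu>. 0 \<le> \<mu> \<Longrightarrow> \<mu> \<le> (\<Sum>R\<in>{R. R \<subseteq> costliest \<and> R \<inter> S' \<noteq> {}}. mu R) \<Longrightarrow>
      eqz f S' \<mu> \<noteq> E_G f mu costliest"
    unfolding M_G_def by blast
  have "S' \<subseteq> N" using S'(2) costliest_subset by blast
  have "eq_sol f S' (\<Sum>k\<in>S'. load N s k) max_cost"
    using S'(2) by (intro eq_sol_loads) (auto simp: costliest_def)
  then have "eqz f S' (\<Sum>k\<in>S'. load N s k) = E_G f mu costliest"
    unfolding E_G_costliest eqz_eq_Some_iff_subset[OF \<open>S' \<subseteq> N\<close> S'(1)] .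
  moreover have "0 \<le> (\<Sum>k\<in>S'. load N s k)"
    using load_nonneg[OF profile] by (simp add: sum_nonneg)
  ultimately show False
    using avoid sum_load_le_touching_mass[OF S'(2)] by blast
qed

lemma costliest_in_D_G: "costliest \<in> D_G f mu N"
  unfolding D_G_def using costliest_nonempty costliest_subset E_G_costliest M_G_costliest by simp

lemma E_G_le_max_cost:
  assumes S: "S \<in> D_G f mu N" and E: "E_G f mu S = Some c"
  shows "c \<le> max_cost"
proof (rule ccontr)
  assume "\<not> c \<le> max_cost"
  have "S \<noteq> {}" "S \<subseteq> N" using S unfolding D_G_def by auto
  have "eq_sol f S (\<Sum>R\<in>{R. R \<subseteq> S \<and> R \<noteq> {}}. mu R) c"
    using E unfolding E_G_def eqz_eq_Some_iff_subset[OF \<open>S \<subseteq> N\<close> \<open>S \<noteq> {}\<close>] .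
  moreover have "cost k < c" if "k \<in> S" for k
    using cost_le_max_cost[of k] that \<open>S \<subseteq> N\<close> \<open>\<not> c \<le> max_cost\<close> by auto
  ultimately have "(\<Sum>k\<in>S. load N s k) < (\<Sum>R\<in>{R. R \<subseteq> S \<and> R \<noteq> {}}. mu R)"
    using \<open>S \<subseteq> N\<close> \<open>S \<noteq> {}\<close> by (intro sum_load_less_eq_sol)
  with mass_le_sum_load[OF \<open>S \<subseteq> N\<close>] show False by simp
qed

lemma D_G_max_subset_costliest:
  assumes S: "S \<in> D_G f mu N" and E: "E_G f mu S = Some max_cost"
  shows "S \<subseteq> costliest"
proof (rule ccontr)
  assume "\<not> S \<subseteq> costliest"
  let ?S' = "S - costliest"
  have "S \<subseteq> N" and M: "M_G f mu S = {}" using S unfolding D_G_def by auto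
  have "?S' \<noteq> {}" "?S' \<subseteq> N" using \<open>\<not> S \<subseteq> costliest\<close> \<open>S \<subseteq> N\<close> by auto
  then have "?S' \<notin> M_G f mu S" using M by simp
  then obtain \<mu> where \<mu>_le: "\<mu> \<le> (\<Sum>R\<in>{R. R \<subseteq> S \<and> R \<inter> ?S' \<noteq> {}}. mu R)"
    and eqz: "eqz f ?S' \<mu> = Some max_cost"
    using \<open>?S' \<noteq> {}\<close> E unfolding M_G_def by auto
  have "eq_sol f ?S' \<mu> max_cost"
    using eqz unfolding eqz_eq_Some_iff_subset[OF \<open>?S' \<subseteq> N\<close> \<open>?S' \<noteq> {}\<close>] .
  then have "(\<Sum>k\<in>?S'. load N s k) < \<mu>"
    using \<open>?S' \<subseteq> N\<close> \<open>?S' \<noteq> {}\<close> cost_less_max_cost by (intro sum_load_less_eq_sol) auto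
  with \<mu>_le touching_mass_le_sum_load[OF \<open>S \<subseteq> N\<close>] show False by simp
qed

theorem h_G_eq_max_cost: "h_G f mu N = max_cost"
  unfolding h_G_def
proof (rule Max_eqI)
  have "D_G f mu N \<subseteq> Pow N" unfolding D_G_def by blast
  then show "finite ((\<lambda>S. the (E_G f mu S)) ` D_G f mu N)"
    using finite_N by (meson finite_Pow_iff finite_imageI finite_subset)
  show "max_cost \<in> (\<lambda>S. the (E_G f mu S)) ` D_G f mu N"
    using costliest_in_D_G E_G_costliest by force
next
  fix c assume "c \<in> (\<lambda>S. the (E_G f mu S)) ` D_G f mu N"
  then obtain S where S: "S \<in> D_G f mu N" and "c = the (E_G f mu S)" by blast
  then have "E_G f mu S = Some c" unfolding D_G_def by auto
  with S show "c \<le> max_cost" by (rule E_G_le_max_cost)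
qed

theorem P_G_eq_costliest: "P_G f mu N = costliest"
  unfolding P_G_def h_G_eq_max_cost
  using D_G_max_subset_costliest costliest_in_D_G E_G_costliest by blast

lemma load_costliest:
  assumes "j \<in> costliest"
  shows "load costliest s j = load N s j"
  unfolding load_def
proof (rule sum.mono_neutral_left[OF finite_nonempty_subsets[OF finite_N]])
  show "nonempty_subsets costliest \<subseteq> nonempty_subsets N" using costliest_subset by blast
  show "\<forall>R\<in>nonempty_subsets N - nonempty_subsets costliest. s R j = 0"
    using no_flow_into_costliest assms by blast
qed

theorem restriction_to_costliest:
  "consumption_profile costliest mu s \<and> (\<forall>j\<in>costliest. f j (load costliest s j) = max_cost)"
proof
  show "consumption_profile costliest mu s"
    using profile costliest_subset unfolding consumption_profile_def by blast
  show "\<forall>j\<in>costliest. f j (load costliest s j) = max_cost"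
    using load_costliest unfolding costliest_def by simp
qed

definition residual_profile :: "nat set \<Rightarrow> nat \<Rightarrow> real" where
  "residual_profile R' j = (\<Sum>R\<in>{R. R \<subseteq> N \<and> R \<noteq> {} \<and> R - costliest = R'}. s R j)"

lemma profile_outside_residual:
  assumes "R \<in> nonempty_subsets N" "R - costliest \<noteq> {}" "j \<notin> R - costliest"
  shows "s R j = 0"
proof (cases "j \<in> R")
  case True
  with assms have "j \<in> costliest" "\<not> R \<subseteq> costliest" by auto
  with assms(1) show ?thesis by (intro no_flow_into_costliest)
qed (use assms(1) profile_outside in simp)

lemma consumption_profile_residual:
  "consumption_profile (N - costliest) (mu_minus mu N costliest) residual_profile"
  unfolding consumption_profile_def
proof (intro allI impI conjI)
  fix R' j assume R': "R' \<subseteq> N - costliest \<and> R' \<noteq> {}"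
  show "0 \<le> residual_profile R' j"
    unfolding residual_profile_def using profile_nonneg by (intro sum_nonneg) simp
  show "residual_profile R' j = 0" if "j \<notin> R'"
    unfolding residual_profile_def using profile_outside_residual R' that by (intro sum.neutral) blast
  have "sum (residual_profile R') R' = (\<Sum>R\<in>{R. R \<subseteq> N \<and> R \<noteq> {} \<and> R - costliest = R'}. \<Sum>j\<in>R'. s R j)"
    unfolding residual_profile_def by (rule sum.swap)
  also have "\<dots> = (\<Sum>R\<in>{R. R \<subseteq> N \<and> R \<noteq> {} \<and> R - costliest = R'}. mu R)"
  proof (rule sum.cong[OF refl])
    fix R assume "R \<in> {R. R \<subseteq> N \<and> R \<noteq> {} \<and> R - costliest = R'}"
    then have R: "R \<in> nonempty_subsets N" and "R - costliest = R'" by auto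
    have "finite R'" using R' by (blast intro: finite_subset_N)
    with R' \<open>R - costliest = R'\<close> show "(\<Sum>j\<in>R'. s R j) = mu R"
      using profile_outside_residual[OF R] by (intro sum_profile_eq_mass[OF R]) auto
  qed
  finally show "sum (residual_profile R') R' = mu_minus mu N costliest R'"
    unfolding mu_minus_def .
qed

lemma load_residual:
  assumes "j \<in> N - costliest"
  shows "load (N - costliest) residual_profile j = load N s j"
proof -
  let ?S = "{R \<in> nonempty_subsets N. R - costliest \<noteq> {}}"
  have "finite ?S" by (rule finite_subset[OF _ finite_nonempty_subsets[OF finite_N]]) blast
  have "(\<lambda>R. R - costliest) ` ?S \<subseteq> nonempty_subsets (N - costliest)" by blast
  have "load (N - costliest) residual_profile j =
      (\<Sum>R'\<in>nonempty_subsets (N - costliest). \<Sum>R\<in>{R \<in> ?S. R - costliest = R'}. s R j)"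
    unfolding load_def residual_profile_def by (intro sum.cong refl) auto
  also have "\<dots> = (\<Sum>R\<in>?S. s R j)"
    using \<open>finite ?S\<close> finite_nonempty_subsets[of "N - costliest"] finite_N
      \<open>(\<lambda>R. R - costliest) ` ?S \<subseteq> _\<close>
    by (intro sum.group) auto
  also have "\<dots> = load N s j"
    unfolding load_def using assms profile_outside
    by (intro sum.mono_neutral_left finite_nonempty_subsets finite_N) auto
  finally show ?thesis .
qed

lemma wardrop_equilibrium_residual:
  "wardrop_equilibrium (N - costliest) f (mu_minus mu N costliest) residual_profile"
  unfolding wardrop_equilibrium_def
proof (intro conjI consumption_profile_residual ballI impI)
  fix R' k j
  assume R': "R' \<in> nonempty_subsets (N - costliest)" and k: "k \<in> R'" and j: "j \<in> R'"
    and pos: "0 < residual_profile R' k"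
  have "\<exists>R\<in>{R. R \<subseteq> N \<and> R \<noteq> {} \<and> R - costliest = R'}. 0 < s R k"
  proof (rule ccontr)
    assume "\<not> ?thesis"
    then have "residual_profile R' k \<le> 0"
      unfolding residual_profile_def by (intro sum_nonpos) (meson not_less)
    with pos show False by simp
  qed
  then obtain R where R: "R \<in> nonempty_subsets N" "R - costliest = R'" "0 < s R k" by blast
  with k j have "cost k \<le> cost j" by (intro equilibrium_cost_le) auto
  moreover have "k \<in> N - costliest" "j \<in> N - costliest" using R' k j by auto
  ultimately show
    "f k (load (N - costliest) residual_profile k) \<le> f j (load (N - costliest) residual_profile j)"
    by (simp add: load_residual)
qed

theorem h_G_residual_less:
  assumes "costliest \<noteq> N"
  shows "h_G f (mu_minus mu N costliest) (N - costliest) < max_cost"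
proof -
  interpret residual: wardrop_state "N - costliest" f "mu_minus mu N costliest" residual_profile
  proof
    show "finite (N - costliest)" using finite_N by simp
    show "N - costliest \<noteq> {}" using assms costliest_subset by blast
  qed (use mono wardrop_equilibrium_residual in simp_all)
  obtain k where k: "k \<in> residual.costliest" using residual.costliest_nonempty by blast
  then have "k \<in> N - costliest" using residual.costliest_subset by blast
  have "h_G f (mu_minus mu N costliest) (N - costliest) = residual.max_cost"
    by (rule residual.h_G_eq_max_cost)
  also have "\<dots> = cost k"
    using k load_residual[OF \<open>k \<in> N - costliest\<close>] unfolding residual.costliest_def by simp
  also have "\<dots> < max_cost"
    using \<open>k \<in> N - costliest\<close> by (intro cost_less_max_cost) auto
  finally show ?thesis .
qed

end

theorem mainTheorem15:
  fixes n :: nat and f :: "nat \<Rightarrow> real \<Rightarrow> real" and mu :: "nat set \<Rightarrow> real"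
  assumes mono: "\<And>j. j \<in> {1..n} \<Longrightarrow> mono_on {0..} (f j)"
    and cont: "\<And>j. j \<in> {1..n} \<Longrightarrow> continuous_on {0..} (f j)"
    and mu_nonneg: "\<And>R. R \<subseteq> {1..n} \<Longrightarrow> R \<noteq> {} \<Longrightarrow> 0 \<le> mu R"
  shows "(\<exists>s. consumption_profile (P_G f mu {1..n}) mu s \<and>
            (\<forall>j\<in>P_G f mu {1..n}. f j (load (P_G f mu {1..n}) s j) = h_G f mu {1..n}))
       \<and> (P_G f mu {1..n} \<noteq> {1..n} \<longrightarrow>
            h_G f mu {1..n} > h_G f (mu_minus mu {1..n} (P_G f mu {1..n})) ({1..n} - P_G f mu {1..n}))"
proof (cases "n = 0")
  case True
  then have "P_G f mu {1..n} = {}" unfolding P_G_def D_G_def by auto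
  with True show ?thesis unfolding consumption_profile_def by auto
next
  case False
  obtain s where "wardrop_equilibrium {1..n} f mu s"
    by (rule wardrop_equilibrium_exists[of "{1..n}" f mu]) (use mono cont mu_nonneg in auto)
  then interpret wardrop_state "{1..n}" f mu s
    using False mono by unfold_locales auto
  show ?thesis
    using restriction_to_costliest h_G_residual_less
    unfolding P_G_eq_costliest h_G_eq_max_cost by blast
qed

end
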